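(* (1) If $\alpha:P\to P_0$ is an incentive strategy of the leader and $u^\natural\in\mathcal{E}(\alpha)$, then $(\alpha[u^\natural],u^\natural)\in\mathcal{B}$. (2) If $u_0^\natural\in P_0$ and $u^\natural\in P$ satisfy $(u_0^\natural,u^\natural)\in\mathcal{B}$, then there exists an incentive strategy of the leader $\alpha:P\to P_0$ such that $\alpha[u^\natural]=u_0^\natural$ and $u^\natural\in\mathcal{E}(\alpha)$.
   Context: Static game with a leader (player $0$) and followers $1,\dots,n$. Each $P_i$ ($i=0,\dots,n$) is a nonempty compact metric space and each payoff $J_i:P_0\times P_1\times\dots\times P_n\to\mathbb{R}$ ($i=0,\dots,n$) is continuous; each player maximizes. Let $P=P_1\times\dots\times P_n$; elements $u=(u_1,\dots,u_n)\in P$ are profiles of followers' strategies, and for $u_i'\in P_i$, $(u_i',u_{-i})$ denotes $u$ with the $i$-th component replaced by $u_i'$. Write $J_i(u_0,u)=J_i(u_0,u_1,\dots,u_n)$. An incentive strategy of the leader is an arbitrary map $\alpha:P\to P_0$. The set of followers' Nash equilibria against $\alpha$ is $\mathcal{E}(\alpha)=\{u\in P: J_i(\alpha[u],u)\ge J_i(\alpha[(u_i',u_{-i})],(u_i',u_{-i}))\ \text{for all } i=1,\dots,n,\ u_i'\in P_i\}$. Define $\mathcal{B}=\{(u_0,u)\in P_0\times P: J_i(u_0,u)\ge\max_{u_i'\in P_i}\min_{u_0'\in P_0}J_i(u_0',u_i',u_{-i})\ \text{for } i=1,\dots,n\}$. *)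

theory Defs
  imports "HOL-Analysis.Analysis"
begin

text \<open>All strategy spaces are carried by subsets of one metric space type 'a:
  P 0 is the leader's strategy set, P i (1 \<le> i \<le> n) the followers' sets.  J i u0 u is the payoff of player i.\<close>

definition profiles :: "nat \<Rightarrow> (nat \<Rightarrow> 'a set) \<Rightarrow> (nat \<Rightarrow> 'a) set" where
  "profiles n P = PiE {1..n} P"

definition game :: "nat \<Rightarrow> (nat \<Rightarrow> 'a::metric_space set)
    \<Rightarrow> (nat \<Rightarrow> 'a \<Rightarrow> (nat \<Rightarrow> 'a) \<Rightarrow> real) \<Rightarrow> bool" where
  "game n P J \<longleftrightarrow>
     (\<forall>i\<in>{0..n}. compact (P i) \<and> P i \<noteq> {}) \<and>
     (\<forall>i\<in>{0..n}. continuous_on (P 0 \<times> profiles n P) (\<lambda>(u0, u). J i u0 u))"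

definition incentive :: "nat \<Rightarrow> (nat \<Rightarrow> 'a set) \<Rightarrow> ((nat \<Rightarrow> 'a) \<Rightarrow> 'a) set" where
  "incentive n P = profiles n P \<rightarrow> P 0"

definition NE :: "nat \<Rightarrow> (nat \<Rightarrow> 'a set) \<Rightarrow> (nat \<Rightarrow> 'a \<Rightarrow> (nat \<Rightarrow> 'a) \<Rightarrow> real)
    \<Rightarrow> ((nat \<Rightarrow> 'a) \<Rightarrow> 'a) \<Rightarrow> (nat \<Rightarrow> 'a) set" where
  "NE n P J \<alpha> = {u \<in> profiles n P. \<forall>i\<in>{1..n}. \<forall>v\<in>P i.
       J i (\<alpha> u) u \<ge> J i (\<alpha> (u(i := v))) (u(i := v))}"

text \<open>The set B; max/min are written as SUP/INF (attained under the game assumptions).\<close>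
definition Bset :: "nat \<Rightarrow> (nat \<Rightarrow> 'a set) \<Rightarrow> (nat \<Rightarrow> 'a \<Rightarrow> (nat \<Rightarrow> 'a) \<Rightarrow> real)
    \<Rightarrow> ('a \<times> (nat \<Rightarrow> 'a)) set" where
  "Bset n P J = {(u0, u). u0 \<in> P 0 \<and> u \<in> profiles n P \<and>
     (\<forall>i\<in>{1..n}. J i u0 u \<ge> (SUP v\<in>P i. INF w\<in>P 0. J i w (u(i := v))))}"

end

theory Submission
  imports Defs
begin

text \<open>
  Part (1): at a followers' equilibrium u against \<alpha>, a unilateral
  deviation of follower i to v yields J i (\<alpha> u') u' with u' = u(i := v), and this is
  at least the worst case INF over all leader strategies of J i at u'; taking the
  supremum over v gives exactly the defining inequality of B.
  Part (2): given (u0, u) in B, the leader uses a "trigger" strategy: play u0 at u,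
  and against any other profile x punish the (some) follower who deviated by playing
  a strategy that minimises that follower's payoff at x.  A unilateral deviation of
  follower i is attributed to i, so its payoff drops to the worst case, which is
  bounded by the security level SUP/INF and hence by J i u0 u.
  Compactness of the strategy sets and continuity of the payoffs enter only to
  make these SUP/INF finite and the minimum attained.
\<close>

text \<open>A finite-support product of compact sets is compact: extend the index set to
  the whole type by singletons and apply Tychonoff's theorem for products.\<close>
lemma compact_PiE:
  fixes S :: "'i \<Rightarrow> 'a::topological_space set"
  assumes "\<And>i. i \<in> I \<Longrightarrow> compact (S i)"
  shows "compact (PiE I S)"
proof -
  have PiE_UNIV: "PiE I S = PiE UNIV (\<lambda>i. if i \<in> I then S i else {undefined})"
    by (auto simp: PiE_iff extensional_def split: if_splits)
  have "compactin (product_topology (\<lambda>_. euclidean) UNIV)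
          (PiE UNIV (\<lambda>i. if i \<in> I then S i else {undefined}))"
    using assms by (auto simp: compactin_PiE)
  then show ?thesis
    by (simp add: PiE_UNIV euclidean_product_topology)
qed

lemma payoff_bounded:
  assumes g: "game n P J" and i: "i \<in> {0..n}"
  obtains B where "\<And>w x. w \<in> P 0 \<Longrightarrow> x \<in> profiles n P \<Longrightarrow> \<bar>J i w x\<bar> \<le> B"
proof -
  have "compact (P 0 \<times> profiles n P)"
    using g unfolding game_def profiles_def by (auto intro!: compact_Times compact_PiE)
  moreover have "continuous_on (P 0 \<times> profiles n P) (\<lambda>(w, x). J i w x)"
    using g i unfolding game_def by auto
  ultimately have "bounded ((\<lambda>(w, x). J i w x) ` (P 0 \<times> profiles n P))"
    by (intro compact_imp_bounded compact_continuous_image)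
  then obtain B where "\<forall>y \<in> (\<lambda>(w, x). J i w x) ` (P 0 \<times> profiles n P). norm y \<le> B"
    by (auto simp: bounded_iff)
  then show ?thesis by (intro that[of B]) force
qed

lemma worst_case_le:
  assumes g: "game n P J" and i: "i \<in> {0..n}"
    and x: "x \<in> profiles n P" and w: "w \<in> P 0"
  shows "(INF w'\<in>P 0. J i w' x) \<le> J i w x"
proof (rule cINF_lower[OF _ w])
  obtain B where "\<And>w x. w \<in> P 0 \<Longrightarrow> x \<in> profiles n P \<Longrightarrow> \<bar>J i w x\<bar> \<le> B"
    using payoff_bounded[OF g i] by blast
  then show "bdd_below ((\<lambda>w'. J i w' x) ` P 0)"
    using x by (intro bdd_belowI2[of _ "-B"]) force
qed

lemma profile_upd:
  "x \<in> profiles n P \<Longrightarrow> i \<in> {1..n} \<Longrightarrow> v \<in> P i \<Longrightarrow> x(i := v) \<in> profiles n P"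
  unfolding profiles_def by (auto simp: PiE_iff extensional_def)

lemma worst_case_le_security:
  assumes g: "game n P J" and i: "i \<in> {1..n}"
    and u: "u \<in> profiles n P" and v: "v \<in> P i"
  shows "(INF w\<in>P 0. J i w (u(i := v))) \<le> (SUP v\<in>P i. INF w\<in>P 0. J i w (u(i := v)))"
proof (rule cSUP_upper[OF v])
  obtain B where B: "\<And>w x. w \<in> P 0 \<Longrightarrow> x \<in> profiles n P \<Longrightarrow> \<bar>J i w x\<bar> \<le> B"
    using payoff_bounded[OF g] i by auto
  obtain w0 where w0: "w0 \<in> P 0"
    using g unfolding game_def by fastforce
  have "(INF w\<in>P 0. J i w (u(i := v'))) \<le> B" if v': "v' \<in> P i" for v'
    using worst_case_le[OF g _ profile_upd[OF u i v'] w0] B[OF w0 profile_upd[OF u i v']] i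
    by fastforce
  then show "bdd_above ((\<lambda>v. INF w\<in>P 0. J i w (u(i := v))) ` P i)"
    by (intro bdd_aboveI2) auto
qed

lemma equilibrium_in_B:
  assumes g: "game n P J" and \<alpha>: "\<alpha> \<in> incentive n P" and u: "u \<in> NE n P J \<alpha>"
  shows "(\<alpha> u, u) \<in> Bset n P J"
proof -
  have up: "u \<in> profiles n P" using u by (simp add: NE_def)
  have "(SUP v\<in>P i. INF w\<in>P 0. J i w (u(i := v))) \<le> J i (\<alpha> u) u" if i: "i \<in> {1..n}" for i
  proof (rule cSUP_least)
    show "P i \<noteq> {}" using g i unfolding game_def by auto
  next
    fix v assume v: "v \<in> P i"
    let ?u' = "u(i := v)"
    have "?u' \<in> profiles n P" by (rule profile_upd[OF up i v])
    then have "(INF w\<in>P 0. J i w ?u') \<le> J i (\<alpha> ?u') ?u'"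
      using \<alpha> i by (intro worst_case_le[OF g]) (auto simp: incentive_def)
    also have "\<dots> \<le> J i (\<alpha> u) u" using u i v by (auto simp: NE_def)
    finally show "(INF w\<in>P 0. J i w ?u') \<le> J i (\<alpha> u) u" .
  qed
  moreover have "\<alpha> u \<in> P 0" using \<alpha> up by (auto simp: incentive_def)
  ultimately show ?thesis using up by (auto simp: Bset_def)
qed

definition deviator :: "nat \<Rightarrow> (nat \<Rightarrow> 'a) \<Rightarrow> (nat \<Rightarrow> 'a) \<Rightarrow> nat" where
  "deviator n u x = (SOME i. i \<in> {1..n} \<and> x i \<noteq> u i)"

definition punishment :: "(nat \<Rightarrow> 'a set) \<Rightarrow> (nat \<Rightarrow> 'a \<Rightarrow> (nat \<Rightarrow> 'a) \<Rightarrow> real)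
    \<Rightarrow> nat \<Rightarrow> (nat \<Rightarrow> 'a) \<Rightarrow> 'a" where
  "punishment P J i x = (SOME w. w \<in> P 0 \<and> J i w x = (INF w'\<in>P 0. J i w' x))"

definition trigger :: "nat \<Rightarrow> (nat \<Rightarrow> 'a set) \<Rightarrow> (nat \<Rightarrow> 'a \<Rightarrow> (nat \<Rightarrow> 'a) \<Rightarrow> real)
    \<Rightarrow> 'a \<Rightarrow> (nat \<Rightarrow> 'a) \<Rightarrow> (nat \<Rightarrow> 'a) \<Rightarrow> 'a" where
  "trigger n P J u0 u x = (if x = u then u0 else punishment P J (deviator n u x) x)"

text \<open>Distinct profiles differ at a follower's coordinate, by extensionality.\<close>
lemma deviator_mem:
  assumes "x \<in> profiles n P" "u \<in> profiles n P" "x \<noteq> u"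
  shows "deviator n u x \<in> {1..n}"
proof -
  obtain j where j: "x j \<noteq> u j" using assms(3) by auto
  then have "j \<in> {1..n}"
    using assms(1,2) unfolding profiles_def by (metis PiE_arb)
  with j show ?thesis
    unfolding deviator_def by (metis (mono_tags, lifting) someI)
qed

lemma deviator_upd:
  assumes "i \<in> {1..n}" "u(i := v) \<noteq> u"
  shows "deviator n u (u(i := v)) = i"
  unfolding deviator_def using assms
  by (intro some_equality) (auto split: if_splits)

text \<open>The minimum in the leader's strategy is attained, by continuity on the
  compact set P 0.\<close>
lemma punishment:
  assumes g: "game n P J" and i: "i \<in> {0..n}" and x: "x \<in> profiles n P"
  shows "punishment P J i x \<in> P 0 \<and> J i (punishment P J i x) x = (INF w\<in>P 0. J i w x)"
proof -
  have "continuous_on (P 0 \<times> profiles n P) (\<lambda>(w, x). J i w x)"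
    using g i unfolding game_def by auto
  then have "continuous_on (P 0) ((\<lambda>(w, x). J i w x) \<circ> (\<lambda>w. (w, x)))"
    using x by (intro continuous_on_compose continuous_intros)
      (auto elim: continuous_on_subset)
  then have "continuous_on (P 0) (\<lambda>w. J i w x)" by (simp add: o_def)
  then obtain w where w: "w \<in> P 0" "\<And>w'. w' \<in> P 0 \<Longrightarrow> J i w x \<le> J i w' x"
    using g continuous_attains_inf[of "P 0" "\<lambda>w. J i w x"] unfolding game_def by auto
  then have "J i w x = (INF w'\<in>P 0. J i w' x)"
    using worst_case_le[OF g i x w(1)] by (intro antisym cINF_greatest) auto
  with w(1) show ?thesis
    unfolding punishment_def by (metis (mono_tags, lifting) someI)
qed

lemma trigger_incentive:
  assumes g: "game n P J" and u0: "u0 \<in> P 0" and u: "u \<in> profiles n P"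
  shows "trigger n P J u0 u \<in> incentive n P"
  unfolding incentive_def trigger_def
  using u0 punishment[OF g _ _] deviator_mem[OF _ u] by auto

text \<open>Against the trigger strategy no follower gains by deviating from u, since the
  punished payoff is at most the security level, which (u0, u) \<in> B dominates.\<close>
lemma trigger_NE:
  assumes g: "game n P J" and B: "(u0, u) \<in> Bset n P J"
  shows "u \<in> NE n P J (trigger n P J u0 u)"
proof -
  have u: "u \<in> profiles n P"
    and secure: "\<And>i. i \<in> {1..n} \<Longrightarrow> (SUP v\<in>P i. INF w\<in>P 0. J i w (u(i := v))) \<le> J i u0 u"
    using B by (auto simp: Bset_def)
  have "J i (trigger n P J u0 u (u(i := v))) (u(i := v)) \<le> J i u0 u"
    if i: "i \<in> {1..n}" and v: "v \<in> P i" and dev: "u(i := v) \<noteq> u" for i v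
  proof -
    let ?u' = "u(i := v)"
    have "trigger n P J u0 u ?u' = punishment P J i ?u'"
      using dev deviator_upd[OF i dev] by (simp add: trigger_def)
    then have "J i (trigger n P J u0 u ?u') ?u' = (INF w\<in>P 0. J i w ?u')"
      using punishment[OF g _ profile_upd[OF u i v]] i by simp
    also have "\<dots> \<le> (SUP v\<in>P i. INF w\<in>P 0. J i w (u(i := v)))"
      by (rule worst_case_le_security[OF g i u v])
    also have "\<dots> \<le> J i u0 u" by (rule secure[OF i])
    finally show ?thesis .
  qed
  then show ?thesis
    using u by (fastforce simp: NE_def trigger_def)
qed

theorem lemma3:
  fixes n :: nat and P :: "nat \<Rightarrow> 'a::metric_space set"
    and J :: "nat \<Rightarrow> 'a \<Rightarrow> (nat \<Rightarrow> 'a) \<Rightarrow> real"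
  assumes "game n P J"
  shows "(\<forall>\<alpha> \<in> incentive n P. \<forall>u \<in> NE n P J \<alpha>. (\<alpha> u, u) \<in> Bset n P J)
     \<and> (\<forall>u0 u. (u0, u) \<in> Bset n P J \<longrightarrow>
          (\<exists>\<alpha> \<in> incentive n P. \<alpha> u = u0 \<and> u \<in> NE n P J \<alpha>))"
proof (intro conjI ballI allI impI)
  fix \<alpha> u assume "\<alpha> \<in> incentive n P" "u \<in> NE n P J \<alpha>"
  then show "(\<alpha> u, u) \<in> Bset n P J" by (rule equilibrium_in_B[OF assms])
next
  fix u0 u assume B: "(u0, u) \<in> Bset n P J"
  then have "u0 \<in> P 0" "u \<in> profiles n P" by (auto simp: Bset_def)
  then show "\<exists>\<alpha> \<in> incentive n P. \<alpha> u = u0 \<and> u \<in> NE n P J \<alpha>"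
    using trigger_incentive[OF assms] trigger_NE[OF assms B]
    by (intro bexI[of _ "trigger n P J u0 u"]) (auto simp: trigger_def)
qed

end
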